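(* Let $g:\mathbb{R}^N\to\mathbb{R}\cup\{+\infty\}$ be proper and lower semi-continuous, let $f:\mathbb{R}^N\to\mathbb{R}$ be continuously differentiable such that, for some $\mathbf{L}\in\mathbb{S}_{++}(N)$, the gradient of $f\circ\mathbf{L}^{-1/2}$ is $1$-Lipschitz continuous, and assume $f^g:=f+g$ is bounded from below. Fix $a>0$, $x_0\in\mathbb{R}^N$, and a sequence of matrices $\mathbf{D}_k\in\mathbb{R}^{N\times R}$. For $k\ge0$ and $\boldsymbol\beta\in\mathbb{R}^R$ let $y^{(\boldsymbol\beta)}_k:=x_k+\mathbf{D}_k\boldsymbol\beta$ and $\ell(x;y):=g(x)+f(y)+\langle\nabla f(y),x-y\rangle$. Suppose the sequences $(x_k)_{k}$, $(\boldsymbol\beta_k)_k$, and symmetric matrices $(\mathbf{L}_k)_k$, $(\mathbf{T}_k)_k$ satisfy for all $k\ge0$: $$(x_{k+1},\boldsymbol\beta_k)\in\operatorname*{argmin}_{x\in\mathbb{R}^N}\min_{\boldsymbol\beta\in\mathbb{R}^R}\ \ell(x;y_k^{(\boldsymbol\beta)})+\tfrac12\|x-y_k^{(\boldsymbol\beta)}\|_{\mathbf{T}_k}^2,$$ $\mathbf{T}_k-\mathbf{L}_k-a\mathbf{I}\in\mathbb{S}_+(N)$, and $$f(x_{k+1})\le f(y_k^{(\boldsymbol\beta_k)})+\langle\nabla f(y_k^{(\boldsymbol\beta_k)}),x_{k+1}-y_k^{(\boldsymbol\beta_k)}\rangle+\tfrac12\|x_{k+1}-y_k^{(\boldsymbol\beta_k)}\|_{\mathbf{L}_k}^2.$$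 Suppose $(\mathbf{T}_k)_{k\in\mathbb{N}}$ is bounded. Then the sequence $(f^g(x_k))_{k\in\mathbb{N}}$ is non-increasing and every limit point of $(x_{k+1})_{k\in\mathbb{N}}$ is a stationary point of $f^g$.
   Context: $\mathbb{S}_{+}(N)$ (resp. $\mathbb{S}_{++}(N)$) denotes the set of symmetric positive semi-definite (resp. positive definite) $N\times N$ real matrices; $\mathbf{I}$ is the identity; $\|x\|_{\mathbf{V}}^2:=\langle x,\mathbf{V}x\rangle$. The Fréchet subdifferential $\hat\partial h(\bar x)$ of $h:\mathbb{R}^N\to\mathbb{R}\cup\{+\infty\}$ at $\bar x\in\operatorname{dom}h$ is the set of $v$ with $\liminf_{x\to\bar x,x\ne\bar x}\frac{h(x)-h(\bar x)-\langle v,x-\bar x\rangle}{\|x-\bar x\|}\ge0$; the limiting subdifferential $\partial h(\bar x)$ is the set of $v$ for which there exist $x_k\to\bar x$ with $h(x_k)\to h(\bar x)$ and $v_k\in\hat\partial h(x_k)$ with $v_k\to v$ (both empty outside $\operatorname{dom}h$). A stationary point of $h$ is a point $\bar x\in\operatorname{dom} h$ with $0\in\partial h(\bar x)$. *)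

theory Defs
  imports "HOL-Analysis.Analysis"
begin

definition psd_mat :: "real^'n^'n \<Rightarrow> bool" where
  "psd_mat A \<longleftrightarrow> transpose A = A \<and> (\<forall>x. 0 \<le> x \<bullet> (A *v x))"

definition pd_mat :: "real^'n^'n \<Rightarrow> bool" where
  "pd_mat A \<longleftrightarrow> transpose A = A \<and> (\<forall>x. x \<noteq> 0 \<longrightarrow> 0 < x \<bullet> (A *v x))"

definition wnorm2 :: "real^'n^'n \<Rightarrow> real^'n \<Rightarrow> real" where
  "wnorm2 V x = x \<bullet> (V *v x)"

definition edom :: "('a \<Rightarrow> ereal) \<Rightarrow> 'a set" where
  "edom h = {x. h x < \<infinity>}"

definition proper_fun :: "('a \<Rightarrow> ereal) \<Rightarrow> bool" where
  "proper_fun h \<longleftrightarrow> (\<forall>x. h x \<noteq> -\<infinity>) \<and> (\<exists>x. h x < \<infinity>)"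

definition lsc_fun :: "('a::topological_space \<Rightarrow> ereal) \<Rightarrow> bool" where
  "lsc_fun h \<longleftrightarrow> (\<forall>x. h x \<le> Liminf (at x) h)"

definition frechet_subdiff :: "('a::real_inner \<Rightarrow> ereal) \<Rightarrow> 'a \<Rightarrow> 'a set" where
  "frechet_subdiff h xb =
     (if xb \<in> edom h then
        {v. 0 \<le> Liminf (at xb)
              (\<lambda>x. (h x - h xb - ereal (v \<bullet> (x - xb))) / ereal (norm (x - xb)))}
      else {})"

definition limiting_subdiff :: "('a::real_inner \<Rightarrow> ereal) \<Rightarrow> 'a \<Rightarrow> 'a set" where
  "limiting_subdiff h xb =
     (if xb \<in> edom h then
        {v. \<exists>X V. X \<longlonglongrightarrow> xb \<and> (\<lambda>k. h (X k)) \<longlonglongrightarrow> h xb \<and>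
                  (\<forall>k. V k \<in> frechet_subdiff h (X k)) \<and> V \<longlonglongrightarrow> v}
      else {})"

definition stationary_point :: "('a::real_inner \<Rightarrow> ereal) \<Rightarrow> 'a \<Rightarrow> bool" where
  "stationary_point h xb \<longleftrightarrow> xb \<in> edom h \<and> 0 \<in> limiting_subdiff h xb"

end

theory Submission
  imports Defs
begin

(* Write F = f + g and y_k for the extrapolated point of step k. Comparing the minimiser
   x_{k+1} with the competitor x = x_k, beta = 0, and using that the model with T_k exceeds
   the upper model with L_k by at least a/2 |x_{k+1} - y_k|^2, gives the sufficient decrease
   F(x_{k+1}) + a/2 |x_{k+1} - y_k|^2 <= F(x_k). As F is bounded below, the steps
   x_{k+1} - y_k are square summable and tend to 0. Optimality of x_{k+1} makes
   grad f(x_{k+1}) - grad f(y_k) - T_k (x_{k+1} - y_k) a Frechet subgradient of F at x_{k+1};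
   along a convergent subsequence these tend to 0 by continuity of grad f and boundedness
   of T_k. Comparing with the limit point as competitor and using lower semicontinuity
   gives convergence of the values F(x_{k+1}), so the limit point is stationary. *)

lemma norm_matrix_vector_mult_le:
  fixes A :: "real^'n^'m"
  shows "norm (A *v x) \<le> real CARD('m) * real CARD('n) * norm A * norm x"
proof -
  have "\<bar>A $ i $ j\<bar> \<le> norm A" for i j
    using component_le_norm_cart[of "A $ i" j] Finite_Cartesian_Product.norm_nth_le[of A i] by linarith
  then have "onorm ((*v) A) \<le> real CARD('m) * real CARD('n) * norm A"
    by (rule onorm_le_matrix_component)
  moreover have "norm (A *v x) \<le> onorm ((*v) A) * norm x"
    by (rule onorm[OF matrix_vector_mul_bounded_linear])
  ultimately show ?thesis
    by (meson mult_right_mono norm_ge_zero order_trans)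
qed

lemma bounded_bilinear_matrix_vector_mult:
  "bounded_bilinear ((*v) :: real^'n^'m \<Rightarrow> real^'n \<Rightarrow> real^'m)"
proof (rule bounded_bilinear.intro)
  have "\<forall>(A::real^'n^'m) x. norm (A *v x) \<le> norm A * norm x * (real CARD('m) * real CARD('n))"
    using norm_matrix_vector_mult_le by (intro allI) (simp add: mult_ac)
  then show "\<exists>K. \<forall>(A::real^'n^'m) x. norm (A *v x) \<le> norm A * norm x * K"
    by blast
qed (simp_all add: matrix_vector_right_distrib matrix_vector_mult_add_rdistrib
       scaleR_matrix_vector_assoc matrix_vector_mult_scaleR)

lemma tendsto_matrix_vector_mult_zero:
  fixes T :: "'a \<Rightarrow> real^'n^'m"
  assumes "bounded (range T)" and "(w \<longlongrightarrow> 0) F"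
  shows "((\<lambda>j. T j *v w j) \<longlongrightarrow> 0) F"
proof -
  have "Bfun T F"
    using assms(1) unfolding Bfun_def bounded_pos by (auto intro: always_eventually)
  moreover have "Zfun w F" using assms(2) by (simp add: tendsto_Zfun_iff)
  ultimately show ?thesis
    using bounded_bilinear.Bfun_prod_Zfun[OF bounded_bilinear_matrix_vector_mult]
    by (simp add: tendsto_Zfun_iff)
qed

lemma tendsto_wnorm2_zero:
  assumes "bounded (range T)" and "(w \<longlongrightarrow> 0) F"
  shows "((\<lambda>j. wnorm2 (T j) (w j)) \<longlongrightarrow> 0) F"
  unfolding wnorm2_def
  using tendsto_inner[OF assms(2) tendsto_matrix_vector_mult_zero[OF assms]] by simp

lemma wnorm2_add:
  assumes "transpose T = T"
  shows "wnorm2 T (u + v) = wnorm2 T u + 2 * (u \<bullet> (T *v v)) + wnorm2 T v"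
proof -
  have "v \<bullet> (T *v u) = (transpose T *v v) \<bullet> u"
    by (simp add: dot_lmul_matrix)
  then have "v \<bullet> (T *v u) = u \<bullet> (T *v v)"
    using assms by (simp add: inner_commute)
  then show ?thesis
    unfolding wnorm2_def by (simp add: matrix_vector_right_distrib inner_add_left inner_add_right)
qed

lemma wnorm2_diff_scaled_identity:
  "wnorm2 (T - L - a *\<^sub>R mat 1) v = wnorm2 T v - wnorm2 L v - a * norm v ^ 2"
proof -
  have "(a *\<^sub>R mat 1) *v v = a *\<^sub>R v"
    by (metis matrix_vector_mul_lid scaleR_matrix_vector_assoc)
  then show ?thesis
    by (simp add: wnorm2_def matrix_vector_mult_diff_rdistrib inner_diff_right power2_norm_eq_inner)
qed

lemma wnorm2_little_o:
  "((\<lambda>z. wnorm2 T (z - x) / norm (z - x)) \<longlongrightarrow> 0) (at x)"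
proof (rule Lim_null_comparison)
  have "((\<lambda>z. z - x) \<longlongrightarrow> 0) (at x)"
    using tendsto_diff[OF tendsto_ident_at[of x UNIV] tendsto_const[of x]] by simp
  then show "((\<lambda>z. norm (T *v (z - x))) \<longlongrightarrow> 0) (at x)"
    by (intro tendsto_norm_zero bounded_linear.tendsto_zero[OF matrix_vector_mul_bounded_linear])
  have "\<bar>wnorm2 T (z - x)\<bar> / norm (z - x) \<le> norm (T *v (z - x))" for z
  proof (cases "z = x")
    case False
    then show ?thesis
      using Cauchy_Schwarz_ineq2[of "z - x" "T *v (z - x)"] unfolding wnorm2_def
      by (simp add: divide_le_eq mult.commute)
  qed simp
  then show "\<forall>\<^sub>F z in at x. norm (wnorm2 T (z - x) / norm (z - x)) \<le> norm (T *v (z - x))"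
    by (intro always_eventually allI) (simp add: abs_divide)
qed

lemma lsc_fun_le_liminf:
  assumes "lsc_fun g" and "X \<longlonglongrightarrow> x"
  shows "g x \<le> liminf (\<lambda>j. g (X j))"
  unfolding le_Liminf_iff
proof (intro allI impI)
  fix y assume "y < g x"
  then have "y < Liminf (at x) g"
    using assms(1) unfolding lsc_fun_def using order_less_le_trans by blast
  then have "\<forall>\<^sub>F z in at x. y < g z"
    using less_LiminfD by blast
  with \<open>y < g x\<close> have "\<forall>\<^sub>F z in nhds x. y < g z"
    by (simp add: eventually_nhds_conv_at)
  then show "\<forall>\<^sub>F j in sequentially. y < g (X j)"
    by (rule eventually_compose_filterlim[OF _ assms(2)])
qed

lemma lsc_fun_le_lim_of_upper_bound:
  assumes "lsc_fun g" and "X \<longlonglongrightarrow> x"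
    and "\<And>j. g (X j) \<le> ereal (u j)" and "u \<longlonglongrightarrow> l"
  shows "g x \<le> ereal l"
proof -
  have "g x \<le> liminf (\<lambda>j. g (X j))"
    using assms(1,2) by (rule lsc_fun_le_liminf)
  also have "\<dots> \<le> liminf (\<lambda>j. ereal (u j))"
    using assms(3) by (intro Liminf_mono) simp
  also have "\<dots> = ereal l"
    using assms(4) by (intro lim_imp_Liminf) (auto intro: tendsto_ereal)
  finally show ?thesis .
qed

lemma lsc_fun_tendsto_of_upper_bound:
  assumes "lsc_fun g" and "X \<longlonglongrightarrow> x"
    and "\<And>j. g (X j) \<le> ereal (u j)" and "u \<longlonglongrightarrow> l" and "g x = ereal l"
  shows "(\<lambda>j. g (X j)) \<longlonglongrightarrow> g x"
proof -
  have "limsup (\<lambda>j. g (X j)) \<le> limsup (\<lambda>j. ereal (u j))"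
    using assms(3) by (intro Limsup_mono) simp
  also have "\<dots> = g x"
    using assms(4,5) by (intro lim_imp_Limsup) (auto intro: tendsto_ereal)
  finally have "limsup (\<lambda>j. g (X j)) \<le> g x" .
  moreover have "g x \<le> liminf (\<lambda>j. g (X j))"
    using assms(1,2) by (rule lsc_fun_le_liminf)
  moreover have "liminf (\<lambda>j. g (X j)) \<le> limsup (\<lambda>j. g (X j))"
    by (rule Liminf_le_Limsup) simp
  ultimately show ?thesis
    by (intro Liminf_eq_Limsup) auto
qed

lemma frechet_subdiffI:
  fixes h :: "'a::real_inner \<Rightarrow> ereal"
  assumes hx: "h x = ereal c"
    and lower: "\<And>z. ereal (c + v \<bullet> (z - x) - r z) \<le> h z"
    and little_o: "((\<lambda>z. r z / norm (z - x)) \<longlongrightarrow> 0) (at x)"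
  shows "v \<in> frechet_subdiff h x"
proof -
  let ?q = "\<lambda>z. (h z - h x - ereal (v \<bullet> (z - x))) / ereal (norm (z - x))"
  have "ereal (- (r z / norm (z - x))) \<le> ?q z" if "z \<noteq> x" for z
  proof (cases "h z")
    case (real s)
    have "- r z \<le> s - c - v \<bullet> (z - x)"
      using lower[of z] real by simp
    then have "- r z / norm (z - x) \<le> (s - c - v \<bullet> (z - x)) / norm (z - x)"
      by (rule divide_right_mono) simp
    then show ?thesis using real hx that by simp
  qed (use lower[of z] hx that in simp_all)
  then have "\<forall>\<^sub>F z in at x. ereal (- (r z / norm (z - x))) \<le> ?q z"
    by (auto simp: eventually_at_filter)
  then have "Liminf (at x) (\<lambda>z. ereal (- (r z / norm (z - x)))) \<le> Liminf (at x) ?q"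
    by (rule Liminf_mono)
  moreover have "0 \<le> Liminf (at x) (\<lambda>z. ereal (- (r z / norm (z - x))))"
  proof (cases "at x = bot")
    case False
    have "((\<lambda>z. ereal (- (r z / norm (z - x)))) \<longlongrightarrow> ereal (- 0)) (at x)"
      by (intro tendsto_ereal tendsto_minus little_o)
    then have "Liminf (at x) (\<lambda>z. ereal (- (r z / norm (z - x)))) = ereal (- 0)"
      by (rule lim_imp_Liminf[OF False])
    then show ?thesis
      by (simp add: zero_ereal_def)
  qed simp
  ultimately have "0 \<le> Liminf (at x) ?q"
    by (rule order_trans[rotated])
  moreover have "x \<in> edom h" using hx by (simp add: edom_def)
  ultimately show ?thesis
    unfolding frechet_subdiff_def by simp
qed

lemma has_derivative_remainder_little_o:
  assumes "(f has_derivative (\<lambda>h. gradf x \<bullet> h)) (at x)"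
  shows "((\<lambda>z. (f z - f x - gradf x \<bullet> (z - x)) / norm (z - x)) \<longlongrightarrow> 0) (at x)"
proof (rule Lim_null_comparison)
  show "((\<lambda>z. norm (f z - f x - gradf x \<bullet> (z - x)) / norm (z - x)) \<longlongrightarrow> 0) (at x)"
    using assms unfolding has_derivative_iff_norm by blast
qed (simp add: abs_divide)

lemma frechet_subdiff_add_of_proximal_subgradient:
  fixes g :: "real^'n \<Rightarrow> ereal"
  assumes f_grad: "(f has_derivative (\<lambda>h. gradf x \<bullet> h)) (at x)"
    and gx: "g x = ereal c"
    and prox: "\<And>z. ereal (c + u \<bullet> (z - x) - wnorm2 T (z - x) / 2) \<le> g z"
  shows "gradf x + u \<in> frechet_subdiff (\<lambda>z. ereal (f z) + g z) x"
proof (rule frechet_subdiffI)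
  show "ereal (f x) + g x = ereal (f x + c)"
    using gx by simp
  define r where "r z = wnorm2 T (z - x) / 2 - (f z - f x - gradf x \<bullet> (z - x))" for z
  have lower_eq: "ereal (f x + c + (gradf x + u) \<bullet> (z - x) - r z)
      = ereal (f z) + ereal (c + u \<bullet> (z - x) - wnorm2 T (z - x) / 2)" for z
    by (simp add: r_def inner_add_left)
  show "ereal (f x + c + (gradf x + u) \<bullet> (z - x) - r z) \<le> ereal (f z) + g z" for z
    unfolding lower_eq by (rule add_left_mono[OF prox])
  have "((\<lambda>z. wnorm2 T (z - x) / norm (z - x) / 2
          - (f z - f x - gradf x \<bullet> (z - x)) / norm (z - x)) \<longlongrightarrow> 0 / 2 - 0) (at x)"
    by (intro tendsto_intros wnorm2_little_o has_derivative_remainder_little_o[of f gradf x, OF f_grad]) simp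
  then show "((\<lambda>z. r z / norm (z - x)) \<longlongrightarrow> 0) (at x)"
    by (simp add: r_def diff_divide_distrib mult.commute)
qed

lemma model_argmin_proximal_subgradient:
  assumes T_sym: "transpose T = T"
    and gx: "g x = ereal c"
    and argmin: "\<And>z. g x + ereal (b + p \<bullet> (x - y) + wnorm2 T (x - y) / 2)
                  \<le> g z + ereal (b + p \<bullet> (z - y) + wnorm2 T (z - y) / 2)"
  shows "ereal (c - (p + T *v (x - y)) \<bullet> (z - x) - wnorm2 T (z - x) / 2) \<le> g z"
proof -
  have "wnorm2 T (z - y) = wnorm2 T (z - x) + 2 * ((z - x) \<bullet> (T *v (x - y))) + wnorm2 T (x - y)"
    using wnorm2_add[OF T_sym, of "z - x" "x - y"] by simp
  then have "c - (p + T *v (x - y)) \<bullet> (z - x) - wnorm2 T (z - x) / 2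
      = c + (b + p \<bullet> (x - y) + wnorm2 T (x - y) / 2) - (b + p \<bullet> (z - y) + wnorm2 T (z - y) / 2)"
    by (simp add: inner_add_left inner_diff_right inner_commute algebra_simps)
  moreover have "ereal (c + (b + p \<bullet> (x - y) + wnorm2 T (x - y) / 2)) \<le> g z + ereal (b + p \<bullet> (z - y) + wnorm2 T (z - y) / 2)"
    using argmin[of z] gx by simp
  ultimately show ?thesis
    by (cases "g z") simp_all
qed

lemma sufficient_decrease:
  fixes g :: "real^'n \<Rightarrow> ereal"
  assumes model: "g x' + ereal (f y + gradf y \<bullet> (x' - y) + wnorm2 T (x' - y) / 2)
                   \<le> g x + ereal (f x)"
    and psd: "psd_mat (T - L - a *\<^sub>R mat 1)"
    and upper: "f x' \<le> f y + gradf y \<bullet> (x' - y) + wnorm2 L (x' - y) / 2"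
  shows "ereal (f x') + g x' + ereal (a / 2 * norm (x' - y) ^ 2) \<le> ereal (f x) + g x"
proof -
  have "0 \<le> wnorm2 (T - L - a *\<^sub>R mat 1) (x' - y)"
    using psd by (simp add: psd_mat_def wnorm2_def)
  then have "f x' + a / 2 * norm (x' - y) ^ 2 \<le> f y + gradf y \<bullet> (x' - y) + wnorm2 T (x' - y) / 2"
    using upper by (simp add: wnorm2_diff_scaled_identity)
  then have "ereal (f x') + g x' + ereal (a / 2 * norm (x' - y) ^ 2)
      \<le> g x' + ereal (f y + gradf y \<bullet> (x' - y) + wnorm2 T (x' - y) / 2)"
    by (cases "g x'") simp_all
  also have "\<dots> \<le> g x + ereal (f x)"
    by (rule model)
  finally show ?thesis
    by (simp only: add.commute)
qed

lemma sufficient_decrease_imp_steps_tendsto_zero: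
  fixes F :: "nat \<Rightarrow> ereal" and d :: "nat \<Rightarrow> 'a::real_normed_vector"
  assumes step: "\<And>k. F (Suc k) + ereal (c * norm (d k) ^ 2) \<le> F k"
    and c: "c > 0" and lower: "\<And>k. ereal m \<le> F k" and start: "F 0 \<noteq> \<infinity>"
  shows "d \<longlonglongrightarrow> 0"
proof -
  have F_dec: "F (Suc k) \<le> F k" for k
    using ereal_le_add_self[of "ereal (c * norm (d k) ^ 2)" "F (Suc k)"] step[of k] c by simp
  have "F k \<noteq> \<infinity>" for k
  proof (induction k)
    case (Suc k)
    then show ?case using F_dec[of k] by auto
  qed (rule start)
  define R where "R k = real_of_ereal (F k)" for k
  have F_eq: "F k = ereal (R k)" for k
    using \<open>F k \<noteq> \<infinity>\<close> lower[of k] unfolding R_def by (cases "F k") auto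
  have R_step: "R (Suc k) + c * norm (d k) ^ 2 \<le> R k" for k
    using step[of k] unfolding F_eq by simp
  have "(\<Sum>k<n. c * norm (d k) ^ 2) \<le> R 0 - R n" for n
  proof (induction n)
    case (Suc n)
    then show ?case using R_step[of n] by simp
  qed simp
  also have "R 0 - R n \<le> R 0 - m" for n
    using lower[of n] unfolding F_eq by simp
  finally have "summable (\<lambda>k. c * norm (d k) ^ 2)"
    using c by (intro summableI_nonneg_bounded) simp_all
  then have "(\<lambda>k. c * norm (d k) ^ 2) \<longlonglongrightarrow> 0"
    by (rule summable_LIMSEQ_zero)
  then have "(\<lambda>k. inverse c * (c * norm (d k) ^ 2)) \<longlonglongrightarrow> 0"
    by (rule tendsto_mult_right_zero)
  then have "(\<lambda>k. sqrt (norm (d k) ^ 2)) \<longlonglongrightarrow> sqrt 0"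
    using c by (intro tendsto_real_sqrt) simp
  then have "(\<lambda>k. norm (d k)) \<longlonglongrightarrow> 0"
    by simp
  then show ?thesis
    by (rule tendsto_norm_zero_cancel)
qed

lemma model_minimisers_value_tendsto:
  fixes g :: "real^'n \<Rightarrow> ereal"
  assumes g_lsc: "lsc_fun g" and gx: "g x = ereal \<gamma>"
    and T_bdd: "bounded (range T)"
    and X_lim: "X \<longlonglongrightarrow> x" and Y_lim: "Y \<longlonglongrightarrow> x" and p_lim: "p \<longlonglongrightarrow> q"
    and argmin: "\<And>j. g (X j) + ereal (b j + p j \<bullet> (X j - Y j) + wnorm2 (T j) (X j - Y j) / 2)
                  \<le> g x + ereal (b j + p j \<bullet> (x - Y j) + wnorm2 (T j) (x - Y j) / 2)"
  shows "(\<lambda>j. g (X j)) \<longlonglongrightarrow> g x"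
proof (rule lsc_fun_tendsto_of_upper_bound[OF g_lsc X_lim])
  define e where "e j = p j \<bullet> (x - X j)
      + (wnorm2 (T j) (x - Y j) - wnorm2 (T j) (X j - Y j)) / 2" for j
  show "g (X j) \<le> ereal (\<gamma> + e j)" for j
    using argmin[of j] unfolding gx e_def
    by (cases "g (X j)") (simp_all add: inner_diff_right diff_divide_distrib)
  have "(\<lambda>j. x - Y j) \<longlonglongrightarrow> 0" and "(\<lambda>j. X j - Y j) \<longlonglongrightarrow> 0"
    using tendsto_diff[OF tendsto_const Y_lim, of x] tendsto_diff[OF X_lim Y_lim] by simp_all
  then have "e \<longlonglongrightarrow> q \<bullet> (x - x) + (0 - 0) / 2"
    unfolding e_def
    by (intro tendsto_intros p_lim X_lim tendsto_wnorm2_zero[OF T_bdd]) simp_all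
  then show "(\<lambda>j. \<gamma> + e j) \<longlonglongrightarrow> \<gamma>"
    using tendsto_add[OF tendsto_const, of e 0 sequentially \<gamma>] by simp
qed (rule gx)

lemma limit_of_model_minimisers_stationary:
  fixes g :: "real^'n \<Rightarrow> ereal" and X Y :: "nat \<Rightarrow> real^'n" and T :: "nat \<Rightarrow> real^'n^'n"
  assumes g_ninf: "\<And>z. g z \<noteq> -\<infinity>" and g_lsc: "lsc_fun g"
    and f_grad: "\<And>z. (f has_derivative (\<lambda>h. gradf z \<bullet> h)) (at z)"
    and f_C1: "continuous_on UNIV gradf"
    and T_sym: "\<And>j. transpose (T j) = T j" and T_bdd: "bounded (range T)"
    and argmin: "\<And>j z. g (X j) + ereal (b j + gradf (Y j) \<bullet> (X j - Y j) + wnorm2 (T j) (X j - Y j) / 2)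
                  \<le> g z + ereal (b j + gradf (Y j) \<bullet> (z - Y j) + wnorm2 (T j) (z - Y j) / 2)"
    and F_bdd: "\<And>j. ereal (f (X j)) + g (X j) \<le> C" and C: "C \<noteq> \<infinity>"
    and X_lim: "X \<longlonglongrightarrow> x" and step_lim: "(\<lambda>j. X j - Y j) \<longlonglongrightarrow> 0"
  shows "stationary_point (\<lambda>z. ereal (f z) + g z) x"
proof -
  have Y_lim: "Y \<longlonglongrightarrow> x"
    using tendsto_diff[OF X_lim step_lim] by simp
  have f_lim: "(\<lambda>j. f (X j)) \<longlonglongrightarrow> f x"
    using X_lim has_derivative_continuous[OF f_grad] by (rule isCont_tendsto_compose[rotated])
  have gradf_lim: "(\<lambda>j. gradf (X j)) \<longlonglongrightarrow> gradf x" "(\<lambda>j. gradf (Y j)) \<longlonglongrightarrow> gradf x"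
    using f_C1 X_lim Y_lim by (auto intro: isCont_tendsto_compose simp: continuous_on_eq_continuous_at)
  obtain B where "C \<le> ereal B"
    using C by (cases C) auto
  then have F_le: "ereal (f (X j)) + g (X j) \<le> ereal B" for j
    using F_bdd[of j] by (rule order_trans[rotated])
  have gX_le: "g (X j) \<le> ereal (B - f (X j))" for j
    using F_le[of j] by (cases "g (X j)") simp_all
  define cX where "cX j = real_of_ereal (g (X j))" for j
  have cX: "g (X j) = ereal (cX j)" for j
    using gX_le[of j] g_ninf[of "X j"] unfolding cX_def by (cases "g (X j)") simp_all
  have "g x \<le> ereal (B - f x)"
    using g_lsc X_lim gX_le by (rule lsc_fun_le_lim_of_upper_bound) (intro tendsto_intros f_lim)
  then obtain \<gamma> where gx: "g x = ereal \<gamma>"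
    using g_ninf[of x] by (cases "g x") simp_all
  have "(\<lambda>j. g (X j)) \<longlonglongrightarrow> g x"
    using g_lsc gx T_bdd X_lim Y_lim gradf_lim(2) argmin
    by (rule model_minimisers_value_tendsto)
  then have F_lim: "(\<lambda>j. ereal (f (X j)) + g (X j)) \<longlonglongrightarrow> ereal (f x) + g x"
    using gx f_lim by (intro tendsto_add_ereal) (simp_all add: tendsto_ereal)
  define V where "V j = gradf (X j) - gradf (Y j) - T j *v (X j - Y j)" for j
  have "V j \<in> frechet_subdiff (\<lambda>z. ereal (f z) + g z) (X j)" for j
  proof -
    have "ereal (cX j + (- (gradf (Y j) + T j *v (X j - Y j))) \<bullet> (z - X j)
        - wnorm2 (T j) (z - X j) / 2) \<le> g z" for z
      using model_argmin_proximal_subgradient[OF T_sym[of j] cX[of j] argmin[of j], where z = z]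
      by (simp add: algebra_simps inner_add_left)
    then have "gradf (X j) + - (gradf (Y j) + T j *v (X j - Y j))
        \<in> frechet_subdiff (\<lambda>z. ereal (f z) + g z) (X j)"
      by (rule frechet_subdiff_add_of_proximal_subgradient[where g = g and gradf = gradf, OF f_grad cX])
    then show ?thesis
      unfolding V_def by (simp add: algebra_simps)
  qed
  moreover have "V \<longlonglongrightarrow> gradf x - gradf x - 0"
    unfolding V_def
    by (intro tendsto_intros gradf_lim tendsto_matrix_vector_mult_zero[OF T_bdd step_lim])
  moreover have "x \<in> edom (\<lambda>z. ereal (f z) + g z)"
    using gx by (simp add: edom_def)
  ultimately show ?thesis
    unfolding stationary_point_def limiting_subdiff_def using X_lim F_lim by auto
qed

theorem mainTheorem3:
  fixes g :: "real^'n \<Rightarrow> ereal"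
    and f :: "real^'n \<Rightarrow> real"
    and gradf :: "real^'n \<Rightarrow> real^'n"
    and a :: real
    and x :: "nat \<Rightarrow> real^'n"
    and beta :: "nat \<Rightarrow> real^'r"
    and D :: "nat \<Rightarrow> real^'r^'n"
    and Lk Tk :: "nat \<Rightarrow> real^'n^'n"
  assumes g_proper: "proper_fun g"
    and g_lsc: "lsc_fun g"
    and f_grad: "\<And>z. (f has_derivative (\<lambda>h. gradf z \<bullet> h)) (at z)"
    and f_C1: "continuous_on UNIV gradf"
    and f_Lsmooth: "\<exists>L S G. pd_mat L \<and> pd_mat S \<and> S ** S = matrix_inv L \<and>
                      (\<forall>z. ((\<lambda>w. f (S *v w)) has_derivative (\<lambda>h. G z \<bullet> h)) (at z)) \<and>
                      1-lipschitz_on UNIV G"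
    and fg_bdd: "\<exists>c. \<forall>z. ereal c \<le> ereal (f z) + g z"
    and a_pos: "a > 0"
    and Lk_sym: "\<And>k. transpose (Lk k) = Lk k"
    and Tk_sym: "\<And>k. transpose (Tk k) = Tk k"
    and argmin: "\<And>k z b.
        g (x (Suc k)) + ereal (f (x k + D k *v beta k)
            + gradf (x k + D k *v beta k) \<bullet> (x (Suc k) - (x k + D k *v beta k))
            + wnorm2 (Tk k) (x (Suc k) - (x k + D k *v beta k)) / 2)
        \<le> g z + ereal (f (x k + D k *v b)
            + gradf (x k + D k *v b) \<bullet> (z - (x k + D k *v b))
            + wnorm2 (Tk k) (z - (x k + D k *v b)) / 2)"
    and TLa_psd: "\<And>k. psd_mat (Tk k - Lk k - a *\<^sub>R mat 1)"
    and descent: "\<And>k. f (x (Suc k)) \<le> f (x k + D k *v beta k)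
            + gradf (x k + D k *v beta k) \<bullet> (x (Suc k) - (x k + D k *v beta k))
            + wnorm2 (Lk k) (x (Suc k) - (x k + D k *v beta k)) / 2"
    and Tk_bdd: "bounded (range Tk)"
  shows "decseq (\<lambda>k. ereal (f (x k)) + g (x k)) \<and>
         (\<forall>xb. (\<exists>r. strict_mono r \<and> (\<lambda>j. x (Suc (r j))) \<longlonglongrightarrow> xb) \<longrightarrow>
               stationary_point (\<lambda>z. ereal (f z) + g z) xb)"
proof -
  define y where "y k = x k + D k *v beta k" for k
  let ?F = "\<lambda>z. ereal (f z) + g z"
  have g_ninf: "\<And>z. g z \<noteq> -\<infinity>" and "\<exists>z0. g z0 < \<infinity>"
    using g_proper unfolding proper_fun_def by blast+
  then obtain z0 where z0: "g z0 < \<infinity>" by blast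
  obtain m where m: "\<And>z. ereal m \<le> ?F z" using fg_bdd by blast
  have step: "?F (x (Suc k)) + ereal (a / 2 * norm (x (Suc k) - y k) ^ 2) \<le> ?F (x k)" for k
    using argmin[of k "x k" 0] descent[of k]
    by (intro sufficient_decrease[where gradf = gradf, OF _ TLa_psd[of k]])
      (simp_all add: y_def wnorm2_def)
  have dec: "decseq (\<lambda>k. ?F (x k))"
    using a_pos by (intro decseq_SucI order_trans[OF ereal_le_add_self step]) simp
  have fin: "?F (x (Suc k)) \<noteq> \<infinity>" for k
    using argmin[of k z0 0] z0 by (cases "g (x (Suc k))"; cases "g z0") simp_all
  have "(\<lambda>k. x (Suc (Suc k)) - y (Suc k)) \<longlonglongrightarrow> 0"
    using step[of "Suc k" for k] a_pos m fin[of 0]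
    by (intro sufficient_decrease_imp_steps_tendsto_zero[where F = "\<lambda>k. ?F (x (Suc k))" and c = "a / 2"]) auto
  then have steps: "(\<lambda>k. x (Suc k) - y k) \<longlonglongrightarrow> 0"
    by (rule LIMSEQ_imp_Suc)
  have "stationary_point ?F xb" if r: "strict_mono r" and lim: "(\<lambda>j. x (Suc (r j))) \<longlonglongrightarrow> xb" for r xb
  proof (rule limit_of_model_minimisers_stationary[where T = "\<lambda>j. Tk (r j)" and Y = "\<lambda>j. y (r j)"
        and b = "\<lambda>j. f (y (r j))" and C = "?F (x (Suc 0))"])
    show "bounded (range (\<lambda>j. Tk (r j)))"
      using Tk_bdd by (rule bounded_subset) auto
    show "(\<lambda>j. x (Suc (r j)) - y (r j)) \<longlonglongrightarrow> 0"
      using LIMSEQ_subseq_LIMSEQ[OF steps r] by (simp add: o_def)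
    show "?F (x (Suc (r j))) \<le> ?F (x (Suc 0))" for j
      using dec by (simp add: decseq_def)
  qed (use g_ninf g_lsc f_grad f_C1 Tk_sym argmin lim fin in \<open>simp_all add: y_def\<close>)
  with dec show ?thesis by blast
qed

end
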